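(* Let $p$ be a non-negative integer, $L,M$ non-zero complex numbers, and $\nu$ a complex number such that, if $\nu$ is an integer, then $\nu\le p$. Then the entire function $S_{\nu-2p-1,\nu}(L\mathrm{e}^{Mz})$ is not subnormal.
   Context: $J_\nu,Y_\nu$ are Bessel functions of the first and second kinds; $\psi=\Gamma'/\Gamma$; $(a)_k=a(a+1)\cdots(a+k-1)$; principal branch $-\pi<\arg\zeta<\pi$. The Lommel function $S_{\nu-2p-1,\nu}$ is defined by: if $\nu\notin\{1,\dots,p\}$, $S_{\nu-2p-1,\nu}(\zeta)=\sum_{m=0}^{p-1}\frac{(-1)^m\zeta^{\nu-2p+2m}}{2^{2m+2}(-p)_{m+1}(\nu-p)_{m+1}}+\frac{(-1)^pS_{\nu-1,\nu}(\zeta)}{2^{2p}p!(1-\nu)_p}$, where $S_{\nu-1,\nu}=\Gamma(\nu)[2^{\nu-1}J_\nu\log\zeta-2^{\nu-2}\pi Y_\nu-\frac{\zeta^\nu}{4}\sum_{m\ge0}\frac{(-1)^m(\zeta/2)^{2m}A(m)}{m!\Gamma(\nu+m+1)}]$, $A(m)=2\log2+\psi(\nu+m+1)+\psi(m+1)$, if $-\nu\notin\{0,1,2,\dots\}$; $S_{-1,0}(\zeta)=\frac12\sum_{m\ge0}\frac{(-1)^m(\zeta/2)^{2m}}{(m!)^2}\{[\log\frac\zeta2-\psi(m+1)]^2-\frac12\psi'(m+1)+\frac{\pi^2}4\}$; $S_{-n-1,-n}=\frac{(-1)^n\zeta^n}{n!}\frac{d^n}{d(\zeta^2)^n}S_{-1,0}$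 for integers $n\ge1$. If $\nu\in\{1,\dots,p\}$, $S_{\nu-2p-1,\nu}:=S_{\nu-2p-1,-\nu}$ (Lommel functions are even in $\nu$), which is given by the preceding formulas with $\nu$ replaced by $-\nu$ and $p$ by $p-\nu$. $S_{\nu-2p-1,\nu}(L\mathrm{e}^{Mz})$ is the entire function of $z$ obtained by analytic continuation of a branch along $\zeta=L\mathrm{e}^{Mz}$. An entire $f$ is subnormal if $\limsup_{r\to\infty}\frac{\log\log M(r,f)}{r}=0$, $M(r,f)=\max_{|z|\le r}|f(z)|$. *)

theory Defs
  imports "HOL-Analysis.Analysis"
begin

text \<open>Convention: all functions of the complex variable zeta are lifted to the
logarithmic variable w, zeta = exp w.  Thus zeta powr a is exp (a*w), log zeta is w,
log (zeta/2) is w - ln 2.  Every such lifted function is entire in w, and the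
branches of S(L e^(M z)) obtained by analytic continuation are exactly
z |-> F (Ln L + 2 pi i k + M z), k an integer.\<close>

definition besselJ_lift :: "complex \<Rightarrow> complex \<Rightarrow> complex" where
  "besselJ_lift \<nu> w =
     (\<Sum>m. (-1) ^ m * exp ((\<nu> + 2 * of_nat m) * (w - of_real (ln 2)))
            * rGamma (\<nu> + of_nat m + 1) / of_nat (fact m))"

definition besselY_nonint_lift :: "complex \<Rightarrow> complex \<Rightarrow> complex" where
  "besselY_nonint_lift \<nu> w =
     (besselJ_lift \<nu> w * cos (\<nu> * of_real pi) - besselJ_lift (- \<nu>) w) / sin (\<nu> * of_real pi)"

definition besselY_lift :: "complex \<Rightarrow> complex \<Rightarrow> complex" where
  "besselY_lift \<nu> w =
     (if \<nu> \<in> \<int> then Lim (at \<nu>) (\<lambda>\<mu>. besselY_nonint_lift \<mu> w)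
      else besselY_nonint_lift \<nu> w)"

text \<open>S_{nu-1,nu}, valid when -nu is not in {0,1,2,...}.\<close>
definition lommel_A :: "complex \<Rightarrow> nat \<Rightarrow> complex" where
  "lommel_A \<nu> m = 2 * of_real (ln 2) + Digamma (\<nu> + of_nat m + 1) + Digamma (of_nat m + 1)"

definition lommel_S1_generic :: "complex \<Rightarrow> complex \<Rightarrow> complex" where
  "lommel_S1_generic \<nu> w =
     Gamma \<nu> * (2 powr (\<nu> - 1) * besselJ_lift \<nu> w * w
                - 2 powr (\<nu> - 2) * of_real pi * besselY_lift \<nu> w
                - exp (\<nu> * w) / 4 *
                  (\<Sum>m. (-1) ^ m * exp (2 * of_nat m * (w - of_real (ln 2))) * lommel_A \<nu> m
                        / (of_nat (fact m) * Gamma (\<nu> + of_nat m + 1))))"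

text \<open>S_{-1,0}, lifted.\<close>
definition lommel_S00 :: "complex \<Rightarrow> complex" where
  "lommel_S00 w = 1/2 *
     (\<Sum>m. (-1) ^ m * exp (2 * of_nat m * (w - of_real (ln 2))) / (of_nat (fact m))^2 *
        ((w - of_real (ln 2) - Digamma (of_nat m + 1))^2 - Polygamma 1 (of_nat m + 1) / 2
          + of_real pi ^ 2 / 4))"

text \<open>d/d(zeta^2) in the lifted variable: zeta^2 = exp (2w), so d/d(zeta^2) = exp(-2w)/2 * d/dw.\<close>
definition dzeta2 :: "(complex \<Rightarrow> complex) \<Rightarrow> complex \<Rightarrow> complex" where
  "dzeta2 g = (\<lambda>w. exp (- 2 * w) / 2 * deriv g w)"

text \<open>S_{-n-1,-n} = (-1)^n zeta^n / n! * d^n/d(zeta^2)^n S_{-1,0}.\<close>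
definition lommel_S1_negint :: "nat \<Rightarrow> complex \<Rightarrow> complex" where
  "lommel_S1_negint n w = (-1) ^ n * exp (of_nat n * w) / of_nat (fact n) * (dzeta2 ^^ n) lommel_S00 w"

definition lommel_S1 :: "complex \<Rightarrow> complex \<Rightarrow> complex" where
  "lommel_S1 \<nu> w =
     (if \<exists>n::nat. \<nu> = - of_nat n then lommel_S1_negint (nat (- \<lfloor>Re \<nu>\<rfloor>)) w
      else lommel_S1_generic \<nu> w)"

text \<open>S_{nu-2p-1,nu} for nu not in {1,...,p}.\<close>
definition lommel_gen :: "nat \<Rightarrow> complex \<Rightarrow> complex \<Rightarrow> complex" where
  "lommel_gen p \<nu> w =
     (\<Sum>m<p. (-1) ^ m * exp ((\<nu> - 2 * of_nat p + 2 * of_nat m) * w)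
        / (2 ^ (2 * m + 2) * pochhammer (- of_nat p) (m + 1) * pochhammer (\<nu> - of_nat p) (m + 1)))
     + (-1) ^ p * lommel_S1 \<nu> w / (2 ^ (2 * p) * of_nat (fact p) * pochhammer (1 - \<nu>) p)"

text \<open>S_{nu-2p-1,nu}(exp w) in general, using evenness in nu when nu is in {1,...,p}.\<close>
definition lommel :: "nat \<Rightarrow> complex \<Rightarrow> complex \<Rightarrow> complex" where
  "lommel p \<nu> w =
     (if \<exists>k::nat. 1 \<le> k \<and> k \<le> p \<and> \<nu> = of_nat k
      then lommel_gen (p - nat \<lfloor>Re \<nu>\<rfloor>) (- \<nu>) w
      else lommel_gen p \<nu> w)"

definition max_modulus :: "(complex \<Rightarrow> complex) \<Rightarrow> real \<Rightarrow> real" where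
  "max_modulus f r = Sup ((\<lambda>z. norm (f z)) ` cball 0 r)"

definition subnormal :: "(complex \<Rightarrow> complex) \<Rightarrow> bool" where
  "subnormal f \<longleftrightarrow>
     Limsup at_top (\<lambda>r::real. ereal (ln (ln (max_modulus f r)) / r)) = 0"

end

theory Submission
  imports Defs "HOL-Real_Asymp.Real_Asymp" "HOL-Complex_Analysis.Complex_Analysis"
begin

text \<open>Write zeta = exp w; a branch of S_{nu-2p-1,nu}(zeta) is then an entire function F(w), and
analytic continuation around zeta = 0 is the shift w -> w + 2 pi i.  For non-integral nu,
F = Q + c1 w J_nu + c2 J_{-nu}, where the shift multiplies Q and J_nu by alpha = exp (2 pi i nu) and
J_{-nu} by beta = exp (-2 pi i nu); so a second-order combination of shifts of F (first-order if
alpha = beta) is a non-zero multiple of J_nu.  For nu = -n the non-periodic part of F is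
exp (n w) (d/d zeta^2)^n S_{-1,0}, and the second difference annihilates the logarithms in S_{-1,0};
orders nu in {1..p} reduce to -nu by definition.  Either way a combination of shifts of F equals
exp (gamma w) sum q_m (zeta/2)^(2m) with |q_m| >= 1/(K ((m+N)!)^2).  By Cauchy's estimate such a
series exceeds |q_m| t^(2m)/2 somewhere on |zeta/2| = t, which for m near t/2 is at least
exp (t/8).  Hence F reaches exp (c exp (Re w)) on every vertical line, and log log M(r) for
F(Ln L + M z) grows linearly in r.\<close>

section \<open>Factorials against the exponential\<close>

lemma even_power_le_exp:
  fixes t :: real
  assumes "0 \<le> t"
  shows "t ^ (2 * N) \<le> (8 * real N + 8) ^ (2 * N) * exp (t / 4)"
proof -
  define c where "c = 8 * real N + 8"
  have c: "c > 0" by (simp add: c_def)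
  have "t / c \<le> exp (t / c)" using exp_ge_add_one_self[of "t / c"] by linarith
  hence "(t / c) ^ (2 * N) \<le> exp (t / c) ^ (2 * N)" using assms c by (intro power_mono) auto
  also have "\<dots> = exp (real (2 * N) * (t / c))" by (subst exp_of_nat_mult) simp
  also have "\<dots> \<le> exp (t / 4)"
  proof -
    have "real (2 * N) * (t / c) = t * (2 * real N / c)" by simp
    also have "\<dots> \<le> t * (1 / 4)" using assms c
      by (intro mult_left_mono) (auto simp: c_def field_simps)
    finally show ?thesis by simp
  qed
  finally have "t ^ (2 * N) / c ^ (2 * N) \<le> exp (t / 4)" by (simp add: power_divide)
  thus ?thesis using c unfolding c_def[symmetric] by (simp add: field_simps)
qed

lemma exp_mult_fact_squared_le:
  fixes t :: real
  assumes "t / 2 - 1 \<le> real j" "real j \<le> t / 2"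
  shows "exp (t / 2) * (fact j)\<^sup>2 \<le> exp 1 * t ^ (2 * j)"
proof -
  have "(fact j :: real) \<le> real j ^ j" using fact_le_power[of j] by simp
  also have "\<dots> \<le> (t / 2) ^ j" using assms(2) by (intro power_mono) auto
  finally have "(fact j)\<^sup>2 \<le> ((t / 2) ^ j)\<^sup>2" by (intro power_mono) auto
  hence fact_sq: "(fact j)\<^sup>2 \<le> (t / 2) ^ (2 * j)" by (simp add: power_mult[symmetric] mult.commute)
  have "exp (t / 2) \<le> exp 1 * exp (real j)" using assms(1) by (simp flip: exp_add)
  also have "exp (real j) = exp 1 ^ j" by (simp flip: exp_of_nat_mult)
  also have "\<dots> \<le> 4 ^ j" using exp_le by (intro power_mono) auto
  finally have "exp (t / 2) * (fact j)\<^sup>2 \<le> exp 1 * 4 ^ j * (t / 2) ^ (2 * j)"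
    using fact_sq by (intro mult_mono) auto
  also have "\<dots> = exp 1 * t ^ (2 * j)" by (simp add: power_mult power_divide)
  finally show ?thesis .
qed

lemma eventually_exp_le_power_div_fact_squared:
  fixes K :: real
  assumes K: "0 < K"
  shows "\<forall>\<^sub>F t in at_top. \<exists>m. exp (t / 8) \<le> t ^ (2 * m) / (2 * K * (fact (m + N))\<^sup>2)"
proof -
  define D where "D = 2 * exp 1 * K * (8 * real N + 8) ^ (2 * N)"
  have "\<forall>\<^sub>F t in at_top. D \<le> exp (t / 8)" by real_asymp
  then show ?thesis using eventually_ge_at_top[of "2 * real N + 2"]
  proof eventually_elim
    case (elim t)
    define j where "j = nat \<lfloor>t / 2\<rfloor>"
    have j: "t / 2 - 1 \<le> real j" "real j \<le> t / 2"
      using elim by (simp add: j_def; linarith)+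
    then have "N \<le> j" using elim by linarith
    define m where "m = j - N"
    have "2 * m + 2 * N = 2 * j" using \<open>N \<le> j\<close> by (simp add: m_def)
    then have "t ^ (2 * m) * t ^ (2 * N) = t ^ (2 * j)" by (metis power_add)
    have "exp (t / 8) * (2 * K * (fact j)\<^sup>2) * t ^ (2 * N)
        \<le> exp (t / 8) * (2 * K * (fact j)\<^sup>2) * ((8 * real N + 8) ^ (2 * N) * exp (t / 4))"
      using even_power_le_exp[of t N] elim K by (intro mult_left_mono) auto
    also have "\<dots> = D * exp (t / 8) * exp (t / 4) * (fact j)\<^sup>2 / exp 1" by (simp add: D_def)
    also have "\<dots> \<le> exp (t / 8) * exp (t / 8) * exp (t / 4) * (fact j)\<^sup>2 / exp 1"
      using elim by (intro divide_right_mono mult_right_mono) auto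
    also have "\<dots> = exp (t / 2) * (fact j)\<^sup>2 / exp 1" by (simp flip: exp_add)
    also have "\<dots> \<le> t ^ (2 * m) * t ^ (2 * N)"
      using exp_mult_fact_squared_le[OF j] \<open>t ^ (2 * m) * t ^ (2 * N) = _\<close> by (simp add: field_simps)
    finally have "exp (t / 8) * (2 * K * (fact j)\<^sup>2) \<le> t ^ (2 * m)" using elim by simp
    then have "exp (t / 8) \<le> t ^ (2 * m) / (2 * K * (fact (m + N))\<^sup>2)"
      using K \<open>N \<le> j\<close> by (simp add: m_def field_simps)
    then show ?case by blast
  qed
qed

section \<open>Entire power series\<close>

definition entire_powser :: "(nat \<Rightarrow> complex) \<Rightarrow> bool" where
  "entire_powser c \<longleftrightarrow> (\<forall>u. summable (\<lambda>m. c m * u ^ m))"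

definition eval_powser :: "(nat \<Rightarrow> complex) \<Rightarrow> complex \<Rightarrow> complex" where
  "eval_powser c u = (\<Sum>m. c m * u ^ m)"

lemma entire_powser_diffs: "entire_powser c \<Longrightarrow> entire_powser (diffs c)"
  unfolding entire_powser_def by (intro allI termdiff_converges_all) auto

lemma entire_powser_funpow_diffs: "entire_powser c \<Longrightarrow> entire_powser ((diffs ^^ n) c)"
  by (induction n) (auto intro: entire_powser_diffs)

lemma entire_powserI:
  assumes "\<forall>\<^sub>F m in sequentially. norm (c m) \<le> K * B ^ m / fact m" "0 \<le> B"
  shows "entire_powser c"
  unfolding entire_powser_def
proof
  fix u :: complex
  have "summable (\<lambda>m. K * ((B * norm u) ^ m / fact m))"
    using summable_exp[of "B * norm u"] by (intro summable_mult) (simp add: divide_inverse mult.commute)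
  moreover have "\<forall>\<^sub>F m in sequentially. norm (c m * u ^ m) \<le> K * ((B * norm u) ^ m / fact m)"
    using assms(1)
  proof eventually_elim
    case (elim m)
    have "norm (c m * u ^ m) = norm (c m) * norm u ^ m" by (simp add: norm_mult norm_power)
    also have "\<dots> \<le> K * B ^ m / fact m * norm u ^ m" using elim by (intro mult_right_mono) auto
    finally show ?case by (simp add: power_mult_distrib)
  qed
  ultimately show "summable (\<lambda>m. c m * u ^ m)" by (rule summable_comparison_test_ev[rotated])
qed

lemma eval_powser_has_field_derivative:
  "entire_powser c \<Longrightarrow> (eval_powser c has_field_derivative eval_powser (diffs c) u) (at u)"
  unfolding eval_powser_def entire_powser_def
  by (rule termdiffs_strong_converges_everywhere) auto

lemma holomorphic_on_eval_powser: "entire_powser c \<Longrightarrow> eval_powser c holomorphic_on S"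
  using eval_powser_has_field_derivative
  by (meson field_differentiable_def holomorphic_on_def field_differentiable_at_within)

lemma continuous_on_eval_powser: "entire_powser c \<Longrightarrow> continuous_on S (eval_powser c)"
  by (intro holomorphic_on_imp_continuous_on holomorphic_on_eval_powser)

lemma deriv_eval_powser: "entire_powser c \<Longrightarrow> deriv (eval_powser c) = eval_powser (diffs c)"
  using eval_powser_has_field_derivative DERIV_imp_deriv by blast

lemma higher_deriv_eval_powser:
  "entire_powser c \<Longrightarrow> (deriv ^^ n) (eval_powser c) = eval_powser ((diffs ^^ n) c)"
proof (induction n)
  case (Suc n)
  then show ?case using deriv_eval_powser[OF entire_powser_funpow_diffs[OF Suc.prems, of n]] by simp
qed simp

lemma eval_powser_0: "eval_powser c 0 = c 0"
  unfolding eval_powser_def using powser_zero[of c] by simp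

lemma funpow_diffs_mult_fact: "(diffs ^^ n) (c :: nat \<Rightarrow> complex) m * fact m = fact (m + n) * c (m + n)"
proof (induction n arbitrary: m)
  case (Suc n)
  have "(diffs ^^ Suc n) c m * fact m = (diffs ^^ n) c (Suc m) * fact (Suc m)"
    by (simp add: diffs_def algebra_simps)
  also have "\<dots> = fact (Suc m + n) * c (Suc m + n)" by (rule Suc.IH)
  finally show ?case by simp
qed simp

text \<open>Cauchy's estimate for the m-th coefficient, read backwards.\<close>
lemma entire_powser_exceeds_half_term:
  assumes "entire_powser c" "0 < s" "c m \<noteq> 0"
  shows "\<exists>u. norm u = s \<and> norm (c m) * s ^ m / 2 < norm (eval_powser c u)"
proof (rule ccontr)
  assume "\<not> ?thesis"
  then have bound: "\<And>u. norm (0 - u) = s \<Longrightarrow> norm (eval_powser c u) \<le> norm (c m) * s ^ m / 2"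
    by force
  have "norm ((deriv ^^ m) (eval_powser c) 0) \<le> fact m * (norm (c m) * s ^ m / 2) / s ^ m"
    by (rule Cauchy_inequality[OF holomorphic_on_eval_powser[OF assms(1)]
          continuous_on_eval_powser[OF assms(1)] assms(2) bound])
  also have "(deriv ^^ m) (eval_powser c) 0 = fact m * c m"
    using higher_deriv_eval_powser[OF assms(1)] eval_powser_0 funpow_diffs_mult_fact[of m c 0] by simp
  finally have "fact m * norm (c m) \<le> fact m * norm (c m) / 2"
    using assms(2) by (simp add: norm_mult)
  then show False using assms(3) by simp
qed

abbreviation two_pi_i :: complex where "two_pi_i \<equiv> 2 * of_real pi * \<i>"

definition zeta_half_sq :: "complex \<Rightarrow> complex" where
  "zeta_half_sq w = exp (2 * (w - of_real (ln 2)))"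

lemma exp_mult_add_two_pi_i:
  "exp ((a + of_int k) * (w + two_pi_i)) = exp (a * two_pi_i) * exp ((a + of_int k) * w)"
proof -
  have "(a + of_int k) * (w + two_pi_i) = (a + of_int k) * w + a * two_pi_i + \<i> * (of_int k * (of_real pi * 2))"
    by (simp add: algebra_simps)
  then show ?thesis by (simp add: exp_add exp_2pi_1_int)
qed

lemma exp_of_int_mult_add_two_pi_i: "exp (of_int k * (w + two_pi_i)) = exp (of_int k * w)"
  using exp_mult_add_two_pi_i[of 0 k w] by simp

lemma zeta_half_sq_add_two_pi_i: "zeta_half_sq (w + two_pi_i) = zeta_half_sq w"
  using exp_mult_add_two_pi_i[of 0 2 "w - of_real (ln 2)"] by (simp add: zeta_half_sq_def algebra_simps)

lemma exp_eq_zeta_half_sq_power: "exp (2 * of_nat m * (w - of_real (ln 2))) = zeta_half_sq w ^ m"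
  by (simp add: zeta_half_sq_def algebra_simps flip: exp_of_nat_mult)

lemma has_field_derivative_eval_powser_zeta_half_sq:
  "entire_powser c \<Longrightarrow> ((\<lambda>w. eval_powser c (zeta_half_sq w)) has_field_derivative
      eval_powser (diffs c) (zeta_half_sq w) * (2 * zeta_half_sq w)) (at w)"
  unfolding zeta_half_sq_def
  by (rule DERIV_chain2[OF eval_powser_has_field_derivative]) (auto intro!: derivative_eq_intros)

lemma holomorphic_on_eval_powser_zeta_half_sq:
  "entire_powser c \<Longrightarrow> (\<lambda>w. eval_powser c (zeta_half_sq w)) holomorphic_on S"
  using has_field_derivative_eval_powser_zeta_half_sq
  by (meson field_differentiable_def holomorphic_on_def field_differentiable_at_within)

lemma continuous_on_eval_powser_zeta_half_sq:
  "entire_powser c \<Longrightarrow> continuous_on S (\<lambda>w. eval_powser c (zeta_half_sq w))"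
  by (intro holomorphic_on_imp_continuous_on holomorphic_on_eval_powser_zeta_half_sq)

lemma eventually_large_on_vertical_segment:
  fixes q :: "nat \<Rightarrow> complex"
  assumes q: "entire_powser q" and K: "0 < K"
    and q_ge: "\<And>m. 1 / (K * (fact (m + N))\<^sup>2) \<le> norm (q m)"
  shows "\<forall>\<^sub>F x in at_top. \<exists>w. Re w = x \<and> \<bar>Im w\<bar> \<le> pi / 2 \<and>
            exp (exp x / 16) \<le> norm (eval_powser q (zeta_half_sq w))"
proof -
  have "filterlim (\<lambda>x::real. exp x / 2) at_top at_top" by real_asymp
  from eventually_compose_filterlim[OF eventually_exp_le_power_div_fact_squared[OF K, of N] this]
  show ?thesis
  proof eventually_elim
    case (elim x)
    define t where "t = exp x / 2"
    then obtain m where m: "exp (t / 8) \<le> t ^ (2 * m) / (2 * K * (fact (m + N))\<^sup>2)"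
      using elim by blast
    have "0 < t" by (simp add: t_def)
    have "0 < 1 / (K * (fact (m + N))\<^sup>2)" using K by simp
    then have "q m \<noteq> 0" using q_ge[of m] by auto
    then obtain u where u: "norm u = t\<^sup>2" "norm (q m) * (t\<^sup>2) ^ m / 2 < norm (eval_powser q u)"
      using entire_powser_exceeds_half_term[OF q] \<open>0 < t\<close> by (meson zero_less_power)
    have "exp (exp x / 16) = exp (t / 8)" by (simp add: t_def)
    also have "\<dots> \<le> 1 / (K * (fact (m + N))\<^sup>2) * (t\<^sup>2) ^ m / 2" using m by (simp add: power_mult)
    also have "\<dots> \<le> norm (q m) * (t\<^sup>2) ^ m / 2"
      using q_ge[of m] by (intro divide_right_mono mult_right_mono) auto
    finally have large: "exp (exp x / 16) \<le> norm (eval_powser q u)" using u(2) by simp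
    have "u \<noteq> 0" using u(1) \<open>0 < t\<close> by auto
    define w where "w = of_real (ln 2) + Ln u / 2"
    have "Re w = ln 2 + ln (t\<^sup>2) / 2" using \<open>u \<noteq> 0\<close> u(1) by (simp add: w_def)
    moreover have "ln (t\<^sup>2) = 2 * ln t" using \<open>0 < t\<close> by (simp add: ln_realpow)
    moreover have "ln t = x - ln 2" by (simp add: t_def ln_div)
    ultimately have "Re w = x" by (simp add: field_simps)
    moreover have "\<bar>Im w\<bar> \<le> pi / 2"
      using mpi_less_Im_Ln[of u] Im_Ln_le_pi[of u] \<open>u \<noteq> 0\<close> by (simp add: w_def abs_le_iff)
    moreover have "zeta_half_sq w = u" using \<open>u \<noteq> 0\<close> by (simp add: w_def zeta_half_sq_def)
    ultimately show ?case using large by metis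
  qed
qed

section \<open>Maximum modulus\<close>

lemma norm_le_max_modulus:
  assumes "continuous_on UNIV f" "norm z \<le> r"
  shows "norm (f z) \<le> max_modulus f r"
proof -
  have "compact ((\<lambda>z. norm (f z)) ` cball 0 r)"
    by (intro compact_continuous_image continuous_on_norm continuous_on_subset[OF assms(1)]) auto
  then have "bdd_above ((\<lambda>z. norm (f z)) ` cball 0 r)"
    by (intro bounded_imp_bdd_above compact_imp_bounded)
  moreover have "norm (f z) \<in> (\<lambda>z. norm (f z)) ` cball 0 r" using assms(2) by auto
  ultimately show ?thesis unfolding max_modulus_def by (rule cSup_upper[rotated])
qed

lemma not_subnormal_if_ln_ln_max_modulus_ge:
  assumes "0 < \<mu>" "\<forall>\<^sub>F r in at_top. \<mu> * r \<le> ln (ln (max_modulus f r))"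
  shows "\<not> subnormal f"
proof
  have "\<forall>\<^sub>F r in at_top. ereal \<mu> \<le> ereal (ln (ln (max_modulus f r)) / r)"
    using assms(2) eventually_gt_at_top[of 0] by eventually_elim (simp add: field_simps)
  then have "ereal \<mu> \<le> Liminf at_top (\<lambda>r. ereal (ln (ln (max_modulus f r)) / r))"
    by (rule Liminf_bounded)
  also have "\<dots> \<le> Limsup at_top (\<lambda>r. ereal (ln (ln (max_modulus f r)) / r))"
    by (rule Liminf_le_Limsup) simp
  finally show "subnormal f \<Longrightarrow> False" using assms(1) by (simp add: subnormal_def)
qed

lemma not_subnormal_if_double_exponential_values:
  fixes F :: "complex \<Rightarrow> complex"
  assumes F: "continuous_on UNIV F" and M: "M \<noteq> 0" and c: "0 < c"
    and large: "\<forall>\<^sub>F x in at_top. \<exists>w. norm w \<le> x + R \<and> exp (c * exp x) \<le> norm (F w)"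
  shows "\<not> subnormal (\<lambda>z. F (c0 + M * z))"
proof -
  define f where "f = (\<lambda>z. F (c0 + M * z))"
  have f: "continuous_on UNIV f"
    unfolding f_def by (intro continuous_on_compose2[OF F] continuous_intros) auto
  define \<mu> where "\<mu> = norm M"
  have "0 < \<mu>" using M by (simp add: \<mu>_def)
  define R0 where "R0 = norm c0 + R"
  obtain X where X: "\<And>x. X \<le> x \<Longrightarrow> \<exists>w. norm w \<le> x + R \<and> exp (c * exp x) \<le> norm (F w)"
    using large by (auto simp: eventually_at_top_linorder)
  have "\<forall>\<^sub>F r in at_top. \<mu> / 2 * r \<le> ln c + (\<mu> * r - R0)"
    using \<open>0 < \<mu>\<close> by real_asymp
  then have "\<forall>\<^sub>F r in at_top. \<mu> / 2 * r \<le> ln (ln (max_modulus f r))"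
    using eventually_ge_at_top[of "(X + R0) / \<mu>"]
  proof eventually_elim
    case (elim r)
    define x where "x = \<mu> * r - R0"
    have "X \<le> x" using elim(2) \<open>0 < \<mu>\<close> by (simp add: x_def field_simps)
    then obtain w where w: "norm w \<le> x + R" "exp (c * exp x) \<le> norm (F w)" using X by blast
    define z where "z = (w - c0) / M"
    have "norm z \<le> (norm w + norm c0) / \<mu>"
      unfolding z_def \<mu>_def norm_divide using M by (intro divide_right_mono norm_triangle_ineq4) auto
    also have "\<dots> \<le> r" using w(1) \<open>0 < \<mu>\<close> by (simp add: x_def R0_def field_simps)
    finally have "exp (c * exp x) \<le> max_modulus f r"
      using norm_le_max_modulus[OF f] w(2) M by (fastforce simp: f_def z_def)
    then have "c * exp x \<le> ln (max_modulus f r)"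
      using c by (metis exp_gt_zero exp_le_cancel_iff exp_ln less_le_trans)
    then have "ln (c * exp x) \<le> ln (ln (max_modulus f r))" using c by (simp add: ln_mono)
    then show ?case using elim(1) c by (simp add: ln_mult x_def)
  qed
  then have "\<not> subnormal f"
    by (rule not_subnormal_if_ln_ln_max_modulus_ge[rotated]) (simp add: \<open>0 < \<mu>\<close>)
  then show ?thesis by (simp add: f_def)
qed

lemma large_term_of_linear_combination:
  fixes a b d X Y Z :: complex
  assumes "(norm a + norm b + norm d + 1) * t \<le> norm (a * X + b * Y + d * Z)"
  shows "t \<le> norm X \<or> t \<le> norm Y \<or> t \<le> norm Z"
proof (rule ccontr)
  assume "\<not> ?thesis"
  then have small: "norm X < t" "norm Y < t" "norm Z < t" by auto
  then have "0 < t" using norm_ge_zero[of X] by linarith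
  have "norm (a * X + b * Y + d * Z) \<le> norm (a * X) + norm (b * Y) + norm (d * Z)"
    using norm_triangle_ineq[of "a * X + b * Y" "d * Z"] norm_triangle_ineq[of "a * X" "b * Y"] by linarith
  also have "\<dots> = norm a * norm X + norm b * norm Y + norm d * norm Z" by (simp add: norm_mult)
  also have "\<dots> \<le> (norm a + norm b + norm d) * t"
    using small by (simp add: distrib_right add_mono mult_left_mono)
  also have "\<dots> < (norm a + norm b + norm d + 1) * t"
    using \<open>0 < t\<close> by (simp add: distrib_right)
  finally show False using assms by simp
qed

lemma not_subnormal_if_shift_combination:
  fixes F :: "complex \<Rightarrow> complex" and q :: "nat \<Rightarrow> complex" and C \<gamma> a b d :: complex
  assumes F: "continuous_on UNIV F" and M: "M \<noteq> 0" and C: "C \<noteq> 0"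
    and q: "entire_powser q" and K: "0 < K"
    and q_ge: "\<And>m. 1 / (K * (fact (m + N))\<^sup>2) \<le> norm (q m)"
    and combination: "\<And>w. C * exp (\<gamma> * w) * eval_powser q (zeta_half_sq w) =
      a * F (w + two_pi_i + two_pi_i) + b * F (w + two_pi_i) + d * F w"
  shows "\<not> subnormal (\<lambda>z. F (c0 + M * z))"
proof -
  define A where "A = norm a + norm b + norm d + 1"
  have "0 < A" by (simp add: A_def add_nonneg_pos)
  have "\<forall>\<^sub>F x in at_top. norm \<gamma> * (x + 2) + ln (A / norm C) \<le> exp x / 32" by real_asymp
  with eventually_large_on_vertical_segment[OF q K q_ge] eventually_ge_at_top[of 0]
  have large: "\<forall>\<^sub>F x in at_top. \<exists>w. norm w \<le> x + 5 * pi \<and> exp (1 / 32 * exp x) \<le> norm (F w)"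
  proof eventually_elim
    case (elim x)
    then obtain w where w: "Re w = x" "\<bar>Im w\<bar> \<le> pi / 2"
      "exp (exp x / 16) \<le> norm (eval_powser q (zeta_half_sq w))" by blast
    have "norm w \<le> x + pi / 2" using cmod_le[of w] w elim by simp
    then have "norm (\<gamma> * w) \<le> norm \<gamma> * (x + 2)"
      using pi_less_4 by (simp add: norm_mult) (intro mult_left_mono, auto)
    then have "exp (- norm \<gamma> * (x + 2)) \<le> norm (exp (\<gamma> * w))"
      using abs_Re_le_cmod[of "\<gamma> * w"] by simp
    have "norm two_pi_i = 2 * pi" by (simp add: norm_mult)
    have "A * exp (1 / 32 * exp x) = norm C * exp (ln (A / norm C) + exp x / 32)"
      using C \<open>0 < A\<close> by (simp add: exp_add)
    also have "\<dots> \<le> norm C * exp (- norm \<gamma> * (x + 2) + exp x / 16)"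
      using elim(3) by (intro mult_left_mono) auto
    also have "\<dots> \<le> norm C * norm (exp (\<gamma> * w)) * norm (eval_powser q (zeta_half_sq w))"
      unfolding exp_add mult.assoc
      using \<open>exp (- norm \<gamma> * (x + 2)) \<le> _\<close> w(3) by (intro mult_left_mono mult_mono) auto
    also have "\<dots> = norm (C * exp (\<gamma> * w) * eval_powser q (zeta_half_sq w))" by (simp add: norm_mult)
    also have "\<dots> = norm (a * F (w + two_pi_i + two_pi_i) + b * F (w + two_pi_i) + d * F w)"
      by (simp only: combination)
    finally have "exp (1 / 32 * exp x) \<le> norm (F (w + two_pi_i + two_pi_i))
        \<or> exp (1 / 32 * exp x) \<le> norm (F (w + two_pi_i)) \<or> exp (1 / 32 * exp x) \<le> norm (F w)"
      unfolding A_def by (rule large_term_of_linear_combination)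
    moreover have "norm (w + two_pi_i + two_pi_i) \<le> x + 5 * pi" "norm (w + two_pi_i) \<le> x + 5 * pi"
        "norm w \<le> x + 5 * pi"
      using \<open>norm two_pi_i = 2 * pi\<close> norm_triangle_ineq[of w two_pi_i] norm_triangle_ineq[of "w + two_pi_i" two_pi_i]
        \<open>norm w \<le> x + pi / 2\<close> pi_gt_zero by linarith+
    ultimately show ?case by blast
  qed
  show ?thesis using not_subnormal_if_double_exponential_values[OF F M _ large] by simp
qed

section \<open>Coefficients of the Bessel and Lommel series\<close>

lemma exists_geometric_bound_of_unit_step:
  fixes g :: "complex \<Rightarrow> complex"
  assumes step: "\<And>z. 1 \<le> norm z \<Longrightarrow> norm (g (z + 1)) \<le> norm (g z) + 1"
  shows "\<exists>D. \<forall>\<^sub>F m in sequentially. norm (g (a + of_nat m + 1)) \<le> D * 2 ^ m"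
proof -
  define m0 where "m0 = nat \<lceil>norm a\<rceil>"
  define D0 where "D0 = norm (g (a + of_nat m0 + 1))"
  have far: "1 \<le> norm (a + of_nat m + 1)" if "m0 \<le> m" for m
  proof -
    have "real m + 1 = norm (of_nat m + 1 :: complex)" by (metis norm_of_nat of_nat_Suc add.commute)
    also have "\<dots> \<le> norm (a + of_nat m + 1) + norm a"
      using norm_triangle_ineq4[of "a + of_nat m + 1" a] by (simp add: algebra_simps)
    finally show ?thesis using that by (simp add: m0_def; linarith)
  qed
  have linear: "norm (g (a + of_nat m + 1)) \<le> D0 + real (m - m0)" if "m0 \<le> m" for m
    using that
  proof (induction m rule: dec_induct)
    case (step m)
    have "norm (g (a + of_nat (Suc m) + 1)) = norm (g ((a + of_nat m + 1) + 1))"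
      by (simp add: algebra_simps)
    also have "\<dots> \<le> norm (g (a + of_nat m + 1)) + 1" using assms far[OF step(1)] by blast
    finally show ?case using step by (simp add: Suc_diff_le)
  qed (simp add: D0_def)
  show ?thesis
  proof (intro exI eventually_sequentiallyI)
    fix m assume "m0 \<le> m"
    have "real m < 2 ^ m" using less_exp[of m] by (metis of_nat_less_iff of_nat_numeral of_nat_power)
    moreover have "D0 \<le> D0 * 2 ^ m" by (simp add: D0_def mult_le_cancel_left1)
    moreover have "real (m - m0) \<le> real m" by simp
    moreover have "(D0 + 1) * 2 ^ m = D0 * 2 ^ m + 2 ^ m" by (simp add: algebra_simps)
    ultimately have "D0 + real (m - m0) \<le> (D0 + 1) * 2 ^ m" by linarith
    then show "norm (g (a + of_nat m + 1)) \<le> (D0 + 1) * 2 ^ m" using linear[OF \<open>m0 \<le> m\<close>] by linarith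
  qed
qed

lemma norm_rGamma_add1_le:
  assumes "1 \<le> norm (z :: complex)"
  shows "norm (rGamma (z + 1)) \<le> norm (rGamma z) + 1"
proof -
  have "1 * norm (rGamma (z + 1)) \<le> norm z * norm (rGamma (z + 1))"
    using assms by (intro mult_right_mono) auto
  also have "\<dots> = norm (rGamma z)" using rGamma_plus1[of z] by (metis norm_mult)
  finally show ?thesis by simp
qed

lemma norm_Digamma_add1_le:
  assumes "1 \<le> norm (z :: complex)"
  shows "norm (Digamma (z + 1)) \<le> norm (Digamma z) + 1"
proof -
  have "Digamma (z + 1) = Digamma z + 1 / z" using assms by (intro Digamma_plus1) auto
  moreover have "norm (1 / z) \<le> 1" using assms by (simp add: norm_divide divide_le_eq_1)
  ultimately show ?thesis using norm_triangle_ineq[of "Digamma z" "1 / z"] by simp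
qed

lemma norm_Polygamma1_add1_le:
  assumes "1 \<le> norm (z :: complex)"
  shows "norm (Polygamma 1 (z + 1)) \<le> norm (Polygamma 1 z) + 1"
proof -
  have "z \<noteq> 0" using assms by auto
  then have "Polygamma 1 (z + 1) = Polygamma 1 z - 1 / z\<^sup>2"
    using Polygamma_plus1[of z 1] by (simp add: power2_eq_square)
  moreover have "norm (1 / z\<^sup>2) \<le> 1"
    using assms one_le_power[of "norm z" 2] by (simp add: norm_divide norm_power divide_le_eq_1)
  ultimately show ?thesis using norm_triangle_ineq4[of "Polygamma 1 z" "1 / z\<^sup>2"] by simp
qed

definition besselJ_coeff :: "complex \<Rightarrow> nat \<Rightarrow> complex" where
  "besselJ_coeff \<nu> m = (-1) ^ m * rGamma (\<nu> + of_nat m + 1) / fact m"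

definition lommel_A_coeff :: "complex \<Rightarrow> nat \<Rightarrow> complex" where
  "lommel_A_coeff \<nu> m = (-1) ^ m * lommel_A \<nu> m / (fact m * Gamma (\<nu> + of_nat m + 1))"

lemma entire_powser_besselJ_coeff: "entire_powser (besselJ_coeff \<nu>)"
proof -
  obtain D where "\<forall>\<^sub>F m in sequentially. norm (rGamma (\<nu> + of_nat m + 1)) \<le> D * 2 ^ m"
    using exists_geometric_bound_of_unit_step[of rGamma, OF norm_rGamma_add1_le] by blast
  then have "\<forall>\<^sub>F m in sequentially. norm (besselJ_coeff \<nu> m) \<le> D * 2 ^ m / fact m"
    by eventually_elim (simp add: besselJ_coeff_def norm_mult norm_divide norm_power divide_right_mono)
  then show ?thesis by (rule entire_powserI) simp
qed

lemma entire_powser_lommel_A_coeff: "entire_powser (lommel_A_coeff \<nu>)"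
proof -
  obtain D where D: "\<forall>\<^sub>F m in sequentially. norm (rGamma (\<nu> + of_nat m + 1)) \<le> D * 2 ^ m"
    using exists_geometric_bound_of_unit_step[of rGamma, OF norm_rGamma_add1_le] by blast
  obtain D1 where D1: "\<forall>\<^sub>F m in sequentially. norm (Digamma (\<nu> + of_nat m + 1)) \<le> D1 * 2 ^ m"
    using exists_geometric_bound_of_unit_step[of Digamma, OF norm_Digamma_add1_le] by blast
  obtain D2 where D2: "\<forall>\<^sub>F m in sequentially. norm (Digamma (0 + of_nat m + 1 :: complex)) \<le> D2 * 2 ^ m"
    using exists_geometric_bound_of_unit_step[of Digamma, OF norm_Digamma_add1_le] by blast
  define E where "E = 2 * ln 2 + D1 + D2"
  have "\<forall>\<^sub>F m in sequentially. norm (lommel_A_coeff \<nu> m) \<le> E * D * 4 ^ m / fact m"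
    using D D1 D2
  proof eventually_elim
    case (elim m)
    have "norm (lommel_A \<nu> m) \<le> 2 * ln 2 + norm (Digamma (\<nu> + of_nat m + 1))
        + norm (Digamma (0 + of_nat m + 1 :: complex))"
      unfolding lommel_A_def
      using norm_triangle_ineq[of "2 * of_real (ln 2) + Digamma (\<nu> + of_nat m + 1)" "Digamma (of_nat m + 1)"]
        norm_triangle_ineq[of "2 * of_real (ln 2)" "Digamma (\<nu> + of_nat m + 1)"] by simp
    also have "\<dots> \<le> E * 2 ^ m"
    proof -
      have "2 * ln 2 * 1 \<le> 2 * ln (2 :: real) * 2 ^ m" by (intro mult_left_mono) auto
      moreover have "E * 2 ^ m = 2 * ln 2 * 2 ^ m + D1 * 2 ^ m + D2 * 2 ^ m" by (simp add: E_def algebra_simps)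
      ultimately show ?thesis using elim by linarith
    qed
    finally have "norm (lommel_A \<nu> m) \<le> E * 2 ^ m" .
    have "norm (lommel_A_coeff \<nu> m) = norm (lommel_A \<nu> m) * norm (rGamma (\<nu> + of_nat m + 1)) / fact m"
      by (simp add: lommel_A_coeff_def norm_mult norm_divide rGamma_inverse_Gamma norm_inverse
          divide_inverse norm_power)
    also have "\<dots> \<le> (E * 2 ^ m) * (D * 2 ^ m) / fact m"
      using \<open>norm (lommel_A \<nu> m) \<le> E * 2 ^ m\<close> elim
      by (intro divide_right_mono mult_mono) (auto intro: order_trans[OF norm_ge_zero])
    also have "\<dots> = E * D * 4 ^ m / fact m" by (simp add: power_mult_distrib[symmetric])
    finally show ?case .
  qed
  then show ?thesis by (rule entire_powserI) simp
qed

lemma besselJ_lift_eq: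
  "besselJ_lift \<nu> w = exp (\<nu> * (w - of_real (ln 2))) * eval_powser (besselJ_coeff \<nu>) (zeta_half_sq w)"
proof -
  have "besselJ_lift \<nu> w
      = (\<Sum>m. exp (\<nu> * (w - of_real (ln 2))) * (besselJ_coeff \<nu> m * zeta_half_sq w ^ m))"
    unfolding besselJ_lift_def
  proof (rule suminf_cong)
    fix m
    have "exp ((\<nu> + 2 * of_nat m) * (w - of_real (ln 2)))
        = exp (\<nu> * (w - of_real (ln 2))) * exp (2 * of_nat m * (w - of_real (ln 2)))"
      by (simp add: algebra_simps flip: exp_add)
    then show "(-1) ^ m * exp ((\<nu> + 2 * of_nat m) * (w - of_real (ln 2))) * rGamma (\<nu> + of_nat m + 1)
        / of_nat (fact m) = exp (\<nu> * (w - of_real (ln 2))) * (besselJ_coeff \<nu> m * zeta_half_sq w ^ m)"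
      by (simp add: besselJ_coeff_def exp_eq_zeta_half_sq_power)
  qed
  also have "\<dots> = exp (\<nu> * (w - of_real (ln 2))) * eval_powser (besselJ_coeff \<nu>) (zeta_half_sq w)"
    using entire_powser_besselJ_coeff unfolding eval_powser_def entire_powser_def
    by (intro suminf_mult) auto
  finally show ?thesis .
qed

lemma lommel_A_series_eq:
  "(\<Sum>m. (-1) ^ m * exp (2 * of_nat m * (w - of_real (ln 2))) * lommel_A \<nu> m
      / (of_nat (fact m) * Gamma (\<nu> + of_nat m + 1)))
    = eval_powser (lommel_A_coeff \<nu>) (zeta_half_sq w)"
  unfolding eval_powser_def exp_eq_zeta_half_sq_power
  by (rule suminf_cong) (simp add: lommel_A_coeff_def)

lemma norm_pochhammer_add1_le_fact:
  fixes a :: complex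
  assumes "norm a \<le> real N"
  shows "norm (pochhammer (a + 1) m) \<le> fact (m + N)"
proof (induction m)
  case (Suc m)
  have "norm (a + 1 + of_nat m) \<le> norm a + norm (1 + of_nat m :: complex)"
    using norm_triangle_ineq[of a "1 + of_nat m"] by (simp add: add.assoc)
  also have "norm (1 + of_nat m :: complex) = 1 + real m"
    by (metis norm_of_nat of_nat_Suc add.commute of_nat_1 of_nat_add)
  finally have "norm (a + 1 + of_nat m) \<le> real N + 1 + real m" using assms by linarith
  then have "norm (pochhammer (a + 1) m) * norm (a + 1 + of_nat m) \<le> fact (m + N) * (real N + 1 + real m)"
    using Suc.IH by (intro mult_mono) auto
  also have "\<dots> = fact (Suc m + N)" by (simp add: algebra_simps)
  finally show ?case by (simp add: pochhammer_Suc norm_mult)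
qed simp

lemma norm_besselJ_coeff_ge:
  assumes "rGamma (\<nu> + 1) \<noteq> 0"
  shows "1 / (1 / norm (rGamma (\<nu> + 1)) * (fact (m + nat \<lceil>norm \<nu>\<rceil>))\<^sup>2) \<le> norm (besselJ_coeff \<nu> m)"
proof -
  define N where "N = nat \<lceil>norm \<nu>\<rceil>"
  have "norm (rGamma (\<nu> + 1)) = norm (pochhammer (\<nu> + 1) m) * norm (rGamma (\<nu> + of_nat m + 1))"
    using pochhammer_rGamma[of "\<nu> + 1" m] by (simp add: norm_mult add_ac)
  also have "\<dots> \<le> fact (m + N) * norm (rGamma (\<nu> + of_nat m + 1))"
    by (intro mult_right_mono norm_pochhammer_add1_le_fact norm_ge_zero) (simp add: N_def; linarith)
  finally have "norm (rGamma (\<nu> + 1)) / (fact (m + N))\<^sup>2 \<le> norm (rGamma (\<nu> + of_nat m + 1)) / fact (m + N)"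
    by (simp add: power2_eq_square field_simps)
  also have "\<dots> \<le> norm (rGamma (\<nu> + of_nat m + 1)) / fact m"
    by (intro divide_left_mono fact_mono) auto
  finally show ?thesis
    using assms by (simp add: N_def besselJ_coeff_def norm_mult norm_divide norm_power)
qed

section \<open>Orders that are not integers\<close>

lemma shift_combination_of_quasiperiodic:
  fixes F Q J J' :: "complex \<Rightarrow> complex"
  assumes F: "\<And>w. F w = Q w + a * w * J w + b * J' w"
    and Q: "\<And>w. Q (w + two_pi_i) = \<alpha> * Q w" and J: "\<And>w. J (w + two_pi_i) = \<alpha> * J w"
    and J': "\<And>w. J' (w + two_pi_i) = \<beta> * J' w"
  shows "F (w + two_pi_i + two_pi_i) - (\<alpha> + \<beta>) * F (w + two_pi_i) + \<alpha> * \<beta> * F w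
      = a * two_pi_i * \<alpha> * (\<alpha> - \<beta>) * J w"
    and "\<alpha> = \<beta> \<Longrightarrow> F (w + two_pi_i) - \<alpha> * F w = a * two_pi_i * \<alpha> * J w"
proof -
  have F2: "F (w + two_pi_i + two_pi_i) = \<alpha> * \<alpha> * Q w + a * (w + two_pi_i + two_pi_i) * (\<alpha> * \<alpha> * J w)
      + b * (\<beta> * \<beta> * J' w)"
    by (simp only: F Q J J') (simp only: mult.assoc)
  have F1: "F (w + two_pi_i) = \<alpha> * Q w + a * (w + two_pi_i) * (\<alpha> * J w) + b * (\<beta> * J' w)"
    by (simp only: F Q J J')
  show "F (w + two_pi_i + two_pi_i) - (\<alpha> + \<beta>) * F (w + two_pi_i) + \<alpha> * \<beta> * F w
      = a * two_pi_i * \<alpha> * (\<alpha> - \<beta>) * J w"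
    unfolding F2 F1 F[of w] by (simp add: algebra_simps)
  show "\<alpha> = \<beta> \<Longrightarrow> F (w + two_pi_i) - \<alpha> * F w = a * two_pi_i * \<alpha> * J w"
    unfolding F1 F[of w] by (simp add: algebra_simps)
qed

lemma besselJ_lift_add_two_pi_i: "besselJ_lift \<nu> (w + two_pi_i) = exp (\<nu> * two_pi_i) * besselJ_lift \<nu> w"
proof -
  have "\<nu> * (w + two_pi_i - of_real (ln 2)) = \<nu> * two_pi_i + \<nu> * (w - of_real (ln 2))"
    by (simp add: algebra_simps)
  then show ?thesis unfolding besselJ_lift_eq zeta_half_sq_add_two_pi_i by (simp add: exp_add)
qed

lemma continuous_on_besselJ_lift: "continuous_on S (besselJ_lift \<nu>)"
  unfolding besselJ_lift_eq[abs_def]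
  by (intro continuous_intros continuous_on_eval_powser_zeta_half_sq entire_powser_besselJ_coeff)

lemma lommel_nonint_decomposition:
  assumes nu: "\<nu> \<notin> \<int>"
  obtains c1 Q c2 where "c1 \<noteq> 0" "continuous_on UNIV Q"
    "\<And>w. Q (w + two_pi_i) = exp (\<nu> * two_pi_i) * Q w"
    "\<And>w. lommel p \<nu> w = Q w + c1 * w * besselJ_lift \<nu> w + c2 * besselJ_lift (- \<nu>) w"
proof -
  define \<alpha> where "\<alpha> = exp (\<nu> * two_pi_i)"
  define S where "S = (\<lambda>w. \<Sum>m<p. (-1) ^ m * exp ((\<nu> - 2 * of_nat p + 2 * of_nat m) * w)
      / (2 ^ (2 * m + 2) * pochhammer (- of_nat p) (m + 1) * pochhammer (\<nu> - of_nat p) (m + 1)))"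
  define cc where "cc = (-1) ^ p / (2 ^ (2 * p) * of_nat (fact p) * pochhammer (1 - \<nu>) p :: complex)"
  define c1 where "c1 = cc * Gamma \<nu> * 2 powr (\<nu> - 1)"
  define c2 where "c2 = cc * Gamma \<nu> * 2 powr (\<nu> - 2) * of_real pi / sin (\<nu> * of_real pi)"
  define Q where "Q = (\<lambda>w. S w - cc * Gamma \<nu> * (2 powr (\<nu> - 2) * of_real pi
      * (besselJ_lift \<nu> w * cos (\<nu> * of_real pi) / sin (\<nu> * of_real pi))
      + exp (\<nu> * w) / 4 * eval_powser (lommel_A_coeff \<nu>) (zeta_half_sq w)))"
  have not_pos_nat: "\<not> (\<exists>k::nat. 1 \<le> k \<and> k \<le> p \<and> \<nu> = of_nat k)"
    and not_neg_nat: "\<not> (\<exists>n::nat. \<nu> = - of_nat n)"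
    using nu by (auto simp: minus_in_Ints_iff)
  have decomposition: "lommel p \<nu> w = Q w + c1 * w * besselJ_lift \<nu> w + c2 * besselJ_lift (- \<nu>) w" for w
  proof -
    have "lommel p \<nu> w = S w + cc * lommel_S1_generic \<nu> w"
      unfolding lommel_def lommel_gen_def lommel_S1_def
      by (simp only: not_pos_nat not_neg_nat if_False) (simp add: S_def cc_def)
    also have "lommel_S1_generic \<nu> w = Gamma \<nu> * (2 powr (\<nu> - 1) * besselJ_lift \<nu> w * w
        - 2 powr (\<nu> - 2) * of_real pi * ((besselJ_lift \<nu> w * cos (\<nu> * of_real pi) - besselJ_lift (- \<nu>) w)
          / sin (\<nu> * of_real pi))
        - exp (\<nu> * w) / 4 * eval_powser (lommel_A_coeff \<nu>) (zeta_half_sq w))"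
      unfolding lommel_S1_generic_def lommel_A_series_eq
      using nu by (simp add: besselY_lift_def besselY_nonint_lift_def)
    finally show ?thesis by (simp add: Q_def c1_def c2_def diff_divide_distrib algebra_simps)
  qed
  have Q_shift: "Q (w + two_pi_i) = \<alpha> * Q w" for w
  proof -
    have "S (w + two_pi_i) = \<alpha> * S w"
      unfolding S_def sum_distrib_left
    proof (rule sum.cong[OF refl])
      fix m
      have "\<nu> - 2 * of_nat p + 2 * of_nat m = \<nu> + of_int (2 * int m - 2 * int p)" by simp
      then show "(-1) ^ m * exp ((\<nu> - 2 * of_nat p + 2 * of_nat m) * (w + two_pi_i))
          / (2 ^ (2 * m + 2) * pochhammer (- of_nat p) (m + 1) * pochhammer (\<nu> - of_nat p) (m + 1))
        = \<alpha> * ((-1) ^ m * exp ((\<nu> - 2 * of_nat p + 2 * of_nat m) * w)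
          / (2 ^ (2 * m + 2) * pochhammer (- of_nat p) (m + 1) * pochhammer (\<nu> - of_nat p) (m + 1)))"
        by (simp only: exp_mult_add_two_pi_i \<alpha>_def) simp
    qed
    moreover have "exp (\<nu> * (w + two_pi_i)) = \<alpha> * exp (\<nu> * w)"
      by (simp add: \<alpha>_def algebra_simps flip: exp_add)
    ultimately show ?thesis
      unfolding Q_def besselJ_lift_add_two_pi_i zeta_half_sq_add_two_pi_i \<alpha>_def by (simp add: algebra_simps)
  qed
  have Q_continuous: "continuous_on UNIV Q"
    unfolding Q_def S_def divide_inverse
    by (intro continuous_on_sum continuous_on_mult_right continuous_intros continuous_on_besselJ_lift
        continuous_on_eval_powser_zeta_half_sq entire_powser_lommel_A_coeff)
  have "c1 \<noteq> 0"
  proof -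
    have "pochhammer (1 - \<nu>) p \<noteq> 0"
    proof
      assume "pochhammer (1 - \<nu>) p = 0"
      then obtain k where "1 - \<nu> = - of_nat k" by (auto simp: pochhammer_eq_0_iff)
      then have "\<nu> = of_int (int k + 1)" by (simp add: algebra_simps)
      with nu show False by auto
    qed
    moreover have "Gamma \<nu> \<noteq> 0" using nu by (auto simp: Gamma_eq_zero_iff dest: nonpos_Ints_Int)
    ultimately show ?thesis by (simp add: c1_def cc_def)
  qed
  then show ?thesis using Q_continuous Q_shift decomposition unfolding \<alpha>_def by (rule that)
qed

lemma not_subnormal_lommel_nonint:
  assumes nu: "\<nu> \<notin> \<int>" and M: "M \<noteq> 0"
  shows "\<not> subnormal (\<lambda>z. lommel p \<nu> (c0 + M * z))"
  using nu
proof (rule lommel_nonint_decomposition[where p = p])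
  fix c1 Q c2
  assume c1: "c1 \<noteq> 0" and Q: "continuous_on UNIV Q"
    and Q_shift: "\<And>w. Q (w + two_pi_i) = exp (\<nu> * two_pi_i) * Q w"
    and F: "\<And>w. lommel p \<nu> w = Q w + c1 * w * besselJ_lift \<nu> w + c2 * besselJ_lift (- \<nu>) w"
  define \<alpha> where "\<alpha> = exp (\<nu> * two_pi_i)"
  define \<beta> where "\<beta> = exp (- \<nu> * two_pi_i)"
  note combination = shift_combination_of_quasiperiodic[where F = "lommel p \<nu>" and Q = Q
      and J = "besselJ_lift \<nu>" and J' = "besselJ_lift (- \<nu>)" and a = c1 and b = c2
      and \<alpha> = \<alpha> and \<beta> = \<beta>, OF F Q_shift[folded \<alpha>_def]
      besselJ_lift_add_two_pi_i[of \<nu>, folded \<alpha>_def] besselJ_lift_add_two_pi_i[of "- \<nu>", folded \<beta>_def]]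
  have cont: "continuous_on UNIV (lommel p \<nu>)"
    unfolding F[abs_def] by (intro continuous_intros Q continuous_on_besselJ_lift)
  have "rGamma (\<nu> + 1) \<noteq> 0"
  proof
    assume "rGamma (\<nu> + 1) = 0"
    then have "\<nu> + 1 - 1 \<in> \<int>" by (auto simp: rGamma_eq_zero_iff dest: nonpos_Ints_Int)
    with nu show False by simp
  qed
  note coeff_ge = norm_besselJ_coeff_ge[OF this]
  have K: "0 < 1 / norm (rGamma (\<nu> + 1))" using \<open>rGamma (\<nu> + 1) \<noteq> 0\<close> by simp
  have J: "besselJ_lift \<nu> w
      = exp (- \<nu> * of_real (ln 2)) * exp (\<nu> * w) * eval_powser (besselJ_coeff \<nu>) (zeta_half_sq w)" for w
    unfolding besselJ_lift_eq by (simp add: algebra_simps flip: exp_add)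
  show ?thesis
  proof (cases "\<alpha> = \<beta>")
    case True
    show ?thesis
    proof (rule not_subnormal_if_shift_combination[OF cont M _ entire_powser_besselJ_coeff K coeff_ge])
      show "c1 * two_pi_i * \<alpha> * exp (- \<nu> * of_real (ln 2)) \<noteq> 0" using c1 by (simp add: \<alpha>_def)
      show "c1 * two_pi_i * \<alpha> * exp (- \<nu> * of_real (ln 2)) * exp (\<nu> * w)
          * eval_powser (besselJ_coeff \<nu>) (zeta_half_sq w)
        = 0 * lommel p \<nu> (w + two_pi_i + two_pi_i) + 1 * lommel p \<nu> (w + two_pi_i) + - \<alpha> * lommel p \<nu> w" for w
      proof -
        have "c1 * two_pi_i * \<alpha> * exp (- \<nu> * of_real (ln 2)) * exp (\<nu> * w)
            * eval_powser (besselJ_coeff \<nu>) (zeta_half_sq w) = c1 * two_pi_i * \<alpha> * besselJ_lift \<nu> w"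
          by (simp only: J mult.assoc)
        also have "\<dots> = lommel p \<nu> (w + two_pi_i) - \<alpha> * lommel p \<nu> w"
          by (rule combination(2)[OF True, symmetric])
        finally show ?thesis by simp
      qed
    qed
  next
    case False
    show ?thesis
    proof (rule not_subnormal_if_shift_combination[OF cont M _ entire_powser_besselJ_coeff K coeff_ge])
      show "c1 * two_pi_i * \<alpha> * (\<alpha> - \<beta>) * exp (- \<nu> * of_real (ln 2)) \<noteq> 0"
        using c1 False by (simp add: \<alpha>_def)
      show "c1 * two_pi_i * \<alpha> * (\<alpha> - \<beta>) * exp (- \<nu> * of_real (ln 2)) * exp (\<nu> * w)
          * eval_powser (besselJ_coeff \<nu>) (zeta_half_sq w)
        = 1 * lommel p \<nu> (w + two_pi_i + two_pi_i) + - (\<alpha> + \<beta>) * lommel p \<nu> (w + two_pi_i)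
          + \<alpha> * \<beta> * lommel p \<nu> w" for w
      proof -
        have "c1 * two_pi_i * \<alpha> * (\<alpha> - \<beta>) * exp (- \<nu> * of_real (ln 2)) * exp (\<nu> * w)
            * eval_powser (besselJ_coeff \<nu>) (zeta_half_sq w) = c1 * two_pi_i * \<alpha> * (\<alpha> - \<beta>) * besselJ_lift \<nu> w"
          by (simp only: J mult.assoc)
        also have "\<dots> = lommel p \<nu> (w + two_pi_i + two_pi_i) - (\<alpha> + \<beta>) * lommel p \<nu> (w + two_pi_i)
            + \<alpha> * \<beta> * lommel p \<nu> w"
          by (rule combination(1)[symmetric])
        finally show ?thesis by (simp only: mult_1 minus_mult_left diff_conv_add_uminus)
      qed
    qed
  qed
qed

section \<open>Orders that are non-positive integers\<close>

definition second_difference :: "(complex \<Rightarrow> complex) \<Rightarrow> complex \<Rightarrow> complex" where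
  "second_difference g w = g (w + two_pi_i + two_pi_i) - 2 * g (w + two_pi_i) + g w"

lemma second_difference_periodic_plus:
  fixes F P E H :: "complex \<Rightarrow> complex"
  assumes F: "\<And>w. F w = P w + k * E w * H w"
    and P: "\<And>w. P (w + two_pi_i) = P w" and E: "\<And>w. E (w + two_pi_i) = E w"
  shows "second_difference F w = k * E w * second_difference H w"
  unfolding second_difference_def F P E by (simp add: algebra_simps)

lemma exp_minus_two_mult_zeta_half_sq: "exp (- 2 * w) * zeta_half_sq w = 1 / 4"
proof -
  have "exp (- 2 * w) * zeta_half_sq w = exp (of_real (- (ln 2 + ln 2)))"
    unfolding zeta_half_sq_def by (simp add: algebra_simps flip: exp_add)
  also have "\<dots> = of_real (inverse (exp (ln 2) * exp (ln 2)))"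
    by (simp only: exp_of_real exp_minus exp_add)
  finally show ?thesis by simp
qed

lemma funpow_dzeta2_eval_powser_zeta_half_sq:
  assumes "entire_powser c"
  shows "(dzeta2 ^^ n) (\<lambda>w. K * eval_powser c (zeta_half_sq w))
      = (\<lambda>w. K / 4 ^ n * eval_powser ((diffs ^^ n) c) (zeta_half_sq w))"
proof (induction n)
  case (Suc n)
  have "dzeta2 (\<lambda>w. K / 4 ^ n * eval_powser ((diffs ^^ n) c) (zeta_half_sq w))
      = (\<lambda>w. K / 4 ^ Suc n * eval_powser ((diffs ^^ Suc n) c) (zeta_half_sq w))"
  proof
    fix w
    have "deriv (\<lambda>w. K / 4 ^ n * eval_powser ((diffs ^^ n) c) (zeta_half_sq w)) w
        = K / 4 ^ n * (eval_powser (diffs ((diffs ^^ n) c)) (zeta_half_sq w) * (2 * zeta_half_sq w))"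
      by (intro DERIV_imp_deriv DERIV_cmult has_field_derivative_eval_powser_zeta_half_sq
          entire_powser_funpow_diffs[OF assms])
    then show "dzeta2 (\<lambda>w. K / 4 ^ n * eval_powser ((diffs ^^ n) c) (zeta_half_sq w)) w
        = K / 4 ^ Suc n * eval_powser ((diffs ^^ Suc n) c) (zeta_half_sq w)"
      using exp_minus_two_mult_zeta_half_sq[of w] unfolding dzeta2_def by (simp add: field_simps)
  qed
  then show ?case by (simp only: funpow.simps comp_def Suc.IH)
qed simp

lemma holomorphic_on_dzeta2: "g holomorphic_on UNIV \<Longrightarrow> dzeta2 g holomorphic_on UNIV"
  unfolding dzeta2_def by (intro holomorphic_intros) auto

lemma holomorphic_on_funpow_dzeta2: "g holomorphic_on UNIV \<Longrightarrow> (dzeta2 ^^ n) g holomorphic_on UNIV"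
  by (induction n) (simp_all add: holomorphic_on_dzeta2)

lemma deriv_second_difference:
  assumes "g holomorphic_on UNIV"
  shows "deriv (second_difference g) w = second_difference (deriv g) w"
proof -
  have shift: "((\<lambda>w. g (w + s)) has_field_derivative deriv g (w + s)) (at w)" for s
    using DERIV_chain2[OF holomorphic_derivI[OF assms] DERIV_add[OF DERIV_ident DERIV_const]] by auto
  have "(second_difference g has_field_derivative second_difference (deriv g) w) (at w)"
    unfolding second_difference_def[abs_def] second_difference_def
    using shift[of "two_pi_i + two_pi_i"] shift[of two_pi_i] shift[of 0]
    by (auto simp: add.assoc intro!: derivative_eq_intros)
  then show ?thesis by (rule DERIV_imp_deriv)
qed

text \<open>d/d(zeta^2) commutes with the monodromy because its factor exp (-2 w) is 2 pi i-periodic.\<close>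
lemma funpow_dzeta2_second_difference:
  assumes "g holomorphic_on UNIV"
  shows "(dzeta2 ^^ n) (second_difference g) = second_difference ((dzeta2 ^^ n) g)"
proof (induction n)
  case (Suc n)
  have "dzeta2 (second_difference h) = second_difference (dzeta2 h)" if "h holomorphic_on UNIV" for h
  proof
    fix w
    have periodic: "exp (- 2 * (w + two_pi_i)) = exp (- 2 * w)" for w
      using exp_of_int_mult_add_two_pi_i[of "-2" w] by simp
    have distrib: "\<And>E a b c :: complex. E * (a - 2 * b + c) = E * a - 2 * (E * b) + E * c"
      by (simp add: algebra_simps)
    show "dzeta2 (second_difference h) w = second_difference (dzeta2 h) w"
      unfolding dzeta2_def deriv_second_difference[OF that] second_difference_def periodic
      by (rule distrib)
  qed
  then show ?case
    using Suc.IH holomorphic_on_funpow_dzeta2[OF assms, of n] by simp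
qed simp

definition lommel_S00_coeff0 :: "nat \<Rightarrow> complex" where
  "lommel_S00_coeff0 m = (-1) ^ m / (fact m)\<^sup>2"

definition lommel_S00_coeff1 :: "nat \<Rightarrow> complex" where
  "lommel_S00_coeff1 m = lommel_S00_coeff0 m * Digamma (of_nat m + 1)"

definition lommel_S00_coeff2 :: "nat \<Rightarrow> complex" where
  "lommel_S00_coeff2 m = lommel_S00_coeff0 m
      * ((Digamma (of_nat m + 1))\<^sup>2 - Polygamma 1 (of_nat m + 1) / 2 + of_real pi ^ 2 / 4)"

lemma norm_lommel_S00_coeff0: "norm (lommel_S00_coeff0 m) = 1 / (fact m)\<^sup>2"
  by (simp add: lommel_S00_coeff0_def norm_divide norm_power)

lemma entire_powser_lommel_S00_coeff0_mult:
  assumes "\<forall>\<^sub>F m in sequentially. norm (e m) \<le> E * 4 ^ m"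
  shows "entire_powser (\<lambda>m. lommel_S00_coeff0 m * e m)"
proof (rule entire_powserI[where K = E and B = 4])
  show "\<forall>\<^sub>F m in sequentially. norm (lommel_S00_coeff0 m * e m) \<le> E * 4 ^ m / fact m"
    using assms
  proof eventually_elim
    case (elim m)
    have "(fact m :: real) \<le> (fact m)\<^sup>2" by (simp add: power2_eq_square)
    then have "norm (lommel_S00_coeff0 m) \<le> 1 / fact m"
      unfolding norm_lommel_S00_coeff0 by (intro divide_left_mono) auto
    then have "norm (lommel_S00_coeff0 m) * norm (e m) \<le> 1 / fact m * (E * 4 ^ m)"
      using elim norm_ge_zero[of "e m"] by (intro mult_mono) auto
    then show ?case by (simp add: norm_mult)
  qed
qed simp

lemma entire_powser_lommel_S00_coeffs:
  "entire_powser lommel_S00_coeff0" "entire_powser lommel_S00_coeff1" "entire_powser lommel_S00_coeff2"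
proof -
  obtain D where D: "\<forall>\<^sub>F m in sequentially. norm (Digamma (of_nat m + 1 :: complex)) \<le> D * 2 ^ m"
    using exists_geometric_bound_of_unit_step[of Digamma 0, OF norm_Digamma_add1_le] by auto
  obtain D' where D': "\<forall>\<^sub>F m in sequentially. norm (Polygamma 1 (of_nat m + 1 :: complex)) \<le> D' * 2 ^ m"
    using exists_geometric_bound_of_unit_step[of "Polygamma 1" 0, OF norm_Polygamma1_add1_le] by auto
  have "entire_powser (\<lambda>m. lommel_S00_coeff0 m * 1)"
    by (rule entire_powser_lommel_S00_coeff0_mult[where E = 1]) simp
  then show "entire_powser lommel_S00_coeff0" by simp
  have "\<forall>\<^sub>F m in sequentially. norm (Digamma (of_nat m + 1 :: complex)) \<le> \<bar>D\<bar> * 4 ^ m"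
    using D
  proof eventually_elim
    case (elim m)
    have "D * 2 ^ m \<le> \<bar>D\<bar> * 4 ^ m" by (intro mult_mono power_mono) auto
    with elim show ?case by linarith
  qed
  then show "entire_powser lommel_S00_coeff1"
    unfolding lommel_S00_coeff1_def by (rule entire_powser_lommel_S00_coeff0_mult)
  have "\<forall>\<^sub>F m in sequentially. norm ((Digamma (of_nat m + 1 :: complex))\<^sup>2 - Polygamma 1 (of_nat m + 1) / 2
      + of_real pi ^ 2 / 4) \<le> (D\<^sup>2 + \<bar>D'\<bar> + pi\<^sup>2) * 4 ^ m"
    using D D'
  proof eventually_elim
    case (elim m)
    define dg where "dg = Digamma (of_nat m + 1 :: complex)"
    define pg where "pg = Polygamma 1 (of_nat m + 1 :: complex)"
    have "norm (dg\<^sup>2) \<le> (D * 2 ^ m)\<^sup>2"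
      unfolding norm_power dg_def using elim(1) by (intro power_mono) auto
    also have "\<dots> = D\<^sup>2 * (2 ^ m * 2 ^ m)" by (simp add: power2_eq_square mult_ac)
    also have "\<dots> = D\<^sup>2 * 4 ^ m" by (simp flip: power_mult_distrib)
    finally have dg_le: "norm (dg\<^sup>2) \<le> D\<^sup>2 * 4 ^ m" .
    have "norm (pg / 2) \<le> norm pg" by (simp add: norm_divide)
    also have "\<dots> \<le> D' * 2 ^ m" using elim(2) by (simp add: pg_def)
    also have "\<dots> \<le> \<bar>D'\<bar> * 4 ^ m" by (intro mult_mono power_mono) auto
    finally have pg_le: "norm (pg / 2) \<le> \<bar>D'\<bar> * 4 ^ m" .
    have "norm (of_real pi ^ 2 / 4 :: complex) \<le> pi\<^sup>2 * 1" by (simp add: norm_power norm_divide)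
    also have "\<dots> \<le> pi\<^sup>2 * 4 ^ m" by (intro mult_left_mono) auto
    finally have pi_le: "norm (of_real pi ^ 2 / 4 :: complex) \<le> pi\<^sup>2 * 4 ^ m" .
    have "norm (dg\<^sup>2 - pg / 2 + of_real pi ^ 2 / 4) \<le> norm (dg\<^sup>2) + norm (pg / 2) + norm (of_real pi ^ 2 / 4 :: complex)"
      using norm_triangle_ineq[of "dg\<^sup>2 - pg / 2" "of_real pi ^ 2 / 4"] norm_triangle_ineq4[of "dg\<^sup>2" "pg / 2"]
      by linarith
    also have "\<dots> \<le> (D\<^sup>2 + \<bar>D'\<bar> + pi\<^sup>2) * 4 ^ m"
      using dg_le pg_le pi_le by (simp add: distrib_right)
    finally show ?case by (simp add: dg_def pg_def)
  qed
  then show "entire_powser lommel_S00_coeff2"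
    unfolding lommel_S00_coeff2_def by (rule entire_powser_lommel_S00_coeff0_mult)
qed

lemma lommel_S00_eq:
  "lommel_S00 w = 1 / 2 * ((w - of_real (ln 2))\<^sup>2 * eval_powser lommel_S00_coeff0 (zeta_half_sq w)
      - 2 * (w - of_real (ln 2)) * eval_powser lommel_S00_coeff1 (zeta_half_sq w)
      + eval_powser lommel_S00_coeff2 (zeta_half_sq w))"
proof -
  define v where "v = w - of_real (ln 2)"
  define u where "u = zeta_half_sq w"
  have sums: "(\<lambda>m. c m * u ^ m) sums eval_powser c u" if "entire_powser c" for c
    using that unfolding entire_powser_def eval_powser_def by (simp add: summable_sums)
  have "(\<lambda>m. v\<^sup>2 * (lommel_S00_coeff0 m * u ^ m) - 2 * v * (lommel_S00_coeff1 m * u ^ m)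
      + lommel_S00_coeff2 m * u ^ m)
      sums (v\<^sup>2 * eval_powser lommel_S00_coeff0 u - 2 * v * eval_powser lommel_S00_coeff1 u
        + eval_powser lommel_S00_coeff2 u)"
    by (intro sums_add sums_diff sums_mult sums entire_powser_lommel_S00_coeffs)
  moreover have "v\<^sup>2 * (lommel_S00_coeff0 m * u ^ m) - 2 * v * (lommel_S00_coeff1 m * u ^ m)
      + lommel_S00_coeff2 m * u ^ m
    = (-1) ^ m * exp (2 * of_nat m * (w - of_real (ln 2))) / (of_nat (fact m))\<^sup>2 *
        ((w - of_real (ln 2) - Digamma (of_nat m + 1))\<^sup>2 - Polygamma 1 (of_nat m + 1) / 2
          + of_real pi ^ 2 / 4)" for m
  proof -
    have square: "\<And>a t x b P R :: complex. a\<^sup>2 * (t * x) - 2 * a * (t * b * x) + t * (b\<^sup>2 - P + R) * x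
        = t * x * ((a - b)\<^sup>2 - P + R)"
      by (simp add: algebra_simps power2_eq_square)
    show ?thesis
      unfolding lommel_S00_coeff1_def lommel_S00_coeff2_def square
      by (simp add: lommel_S00_coeff0_def exp_eq_zeta_half_sq_power u_def v_def)
  qed
  ultimately show ?thesis unfolding lommel_S00_def by (simp add: sums_iff u_def v_def fun_eq_iff)
qed

lemma holomorphic_on_lommel_S00: "lommel_S00 holomorphic_on UNIV"
  unfolding lommel_S00_eq[abs_def]
  by (intro holomorphic_intros holomorphic_on_eval_powser_zeta_half_sq entire_powser_lommel_S00_coeffs)

text \<open>The logarithmic prefactors (w - log 2)^2 and w - log 2 of S_{-1,0} have second differences
2 (2 pi i)^2 and 0, while the series in (zeta/2)^2 are periodic.\<close>
lemma second_difference_lommel_S00: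
  "second_difference lommel_S00 w = two_pi_i\<^sup>2 * eval_powser lommel_S00_coeff0 (zeta_half_sq w)"
  unfolding second_difference_def lommel_S00_eq zeta_half_sq_add_two_pi_i
  by (simp add: algebra_simps power2_eq_square)

lemma second_difference_funpow_dzeta2_lommel_S00:
  "second_difference ((dzeta2 ^^ n) lommel_S00)
    = (\<lambda>w. two_pi_i\<^sup>2 / 4 ^ n * eval_powser ((diffs ^^ n) lommel_S00_coeff0) (zeta_half_sq w))"
  using funpow_dzeta2_second_difference[OF holomorphic_on_lommel_S00, of n]
    funpow_dzeta2_eval_powser_zeta_half_sq[OF entire_powser_lommel_S00_coeffs(1), of n "two_pi_i\<^sup>2"]
  by (simp add: second_difference_lommel_S00[abs_def])

lemma norm_funpow_diffs_lommel_S00_coeff0_ge: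
  "1 / (1 * (fact (m + n))\<^sup>2) \<le> norm ((diffs ^^ n) lommel_S00_coeff0 m)"
proof -
  have "norm ((diffs ^^ n) lommel_S00_coeff0 m) * fact m = fact (m + n) * (1 / (fact (m + n))\<^sup>2)"
    by (metis funpow_diffs_mult_fact norm_lommel_S00_coeff0 norm_fact norm_mult)
  then have "norm ((diffs ^^ n) lommel_S00_coeff0 m) = 1 / (fact m * fact (m + n))"
    by (simp add: power2_eq_square field_simps)
  moreover have "fact m * fact (m + n) \<le> (fact (m + n) :: real)\<^sup>2"
    unfolding power2_eq_square by (intro mult_right_mono fact_mono) auto
  ultimately show ?thesis by (simp add: divide_left_mono)
qed

lemma lommel_gen_neg_of_nat_decomposition:
  obtains k S where "k \<noteq> 0" "continuous_on UNIV S" "\<And>w. S (w + two_pi_i) = S w"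
    "\<And>w. lommel_gen p (- of_nat n) w = S w + k * exp (of_nat n * w) * (dzeta2 ^^ n) lommel_S00 w"
proof
  define cc where "cc = (-1) ^ p / (2 ^ (2 * p) * of_nat (fact p) * pochhammer (1 - (- of_nat n)) p :: complex)"
  show "cc * (-1) ^ n / of_nat (fact n) \<noteq> 0"
  proof -
    have "pochhammer (1 - (- of_nat n)) p \<noteq> (0 :: complex)"
    proof
      assume "pochhammer (1 - (- of_nat n)) p = (0 :: complex)"
      then obtain j where "1 - (- of_nat n) = (- of_nat j :: complex)" by (auto simp: pochhammer_eq_0_iff)
      then have "of_nat (1 + n + j) = (0 :: complex)" by (simp add: eq_neg_iff_add_eq_0 add.assoc)
      then show False by (simp only: of_nat_eq_0_iff)
    qed
    then show ?thesis by (simp add: cc_def)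
  qed
  define S where "S = (\<lambda>w. \<Sum>m<p. (-1) ^ m * exp ((- of_nat n - 2 * of_nat p + 2 * of_nat m) * w)
      / (2 ^ (2 * m + 2) * pochhammer (- of_nat p) (m + 1) * pochhammer (- of_nat n - of_nat p) (m + 1) :: complex))"
  show "continuous_on UNIV S"
    unfolding S_def divide_inverse by (intro continuous_on_sum continuous_on_mult_right continuous_intros)
  show "S (w + two_pi_i) = S w" for w
  proof -
    have "(- of_nat n - 2 * of_nat p + 2 * of_nat m :: complex) = of_int (2 * int m - 2 * int p - int n)" for m
      by simp
    then show ?thesis unfolding S_def by (simp only: exp_of_int_mult_add_two_pi_i)
  qed
  show "lommel_gen p (- of_nat n) w
      = S w + cc * (-1) ^ n / of_nat (fact n) * exp (of_nat n * w) * (dzeta2 ^^ n) lommel_S00 w" for w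
  proof -
    have "lommel_S1 (- of_nat n) w = lommel_S1_negint n w" by (auto simp: lommel_S1_def floor_minus)
    then show ?thesis
      unfolding lommel_gen_def lommel_S1_negint_def S_def cc_def by (simp add: ac_simps)
  qed
qed

lemma not_subnormal_lommel_gen_neg_of_nat:
  assumes M: "M \<noteq> 0"
  shows "\<not> subnormal (\<lambda>z. lommel_gen p (- of_nat n) (c0 + M * z))"
proof (rule lommel_gen_neg_of_nat_decomposition[where p = p and n = n])
  fix k S
  assume k: "k \<noteq> 0" and S: "continuous_on UNIV S" "\<And>w. S (w + two_pi_i) = S w"
    and F: "\<And>w. lommel_gen p (- of_nat n) w = S w + k * exp (of_nat n * w) * (dzeta2 ^^ n) lommel_S00 w"
  have "exp (of_nat n * (w + two_pi_i)) = exp (of_nat n * w)" for w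
    using exp_of_int_mult_add_two_pi_i[of "int n" w] by simp
  note combination = second_difference_periodic_plus[where F = "lommel_gen p (- of_nat n)"
      and E = "\<lambda>w. exp (of_nat n * w)" and H = "(dzeta2 ^^ n) lommel_S00", OF F S(2) this]
  have "continuous_on UNIV ((dzeta2 ^^ n) lommel_S00)"
    by (rule holomorphic_on_imp_continuous_on[OF holomorphic_on_funpow_dzeta2[OF holomorphic_on_lommel_S00]])
  then have cont: "continuous_on UNIV (lommel_gen p (- of_nat n))"
    unfolding F[abs_def] by (intro continuous_intros S)
  show ?thesis
  proof (rule not_subnormal_if_shift_combination[OF cont M _
        entire_powser_funpow_diffs[OF entire_powser_lommel_S00_coeffs(1)] _
        norm_funpow_diffs_lommel_S00_coeff0_ge])
    show "k * (two_pi_i\<^sup>2 / 4 ^ n) \<noteq> 0" using k by simp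
    show "k * (two_pi_i\<^sup>2 / 4 ^ n) * exp (of_nat n * w)
        * eval_powser ((diffs ^^ n) lommel_S00_coeff0) (zeta_half_sq w)
      = 1 * lommel_gen p (- of_nat n) (w + two_pi_i + two_pi_i) + - 2 * lommel_gen p (- of_nat n) (w + two_pi_i)
        + 1 * lommel_gen p (- of_nat n) w" for w
    proof -
      have "k * (two_pi_i\<^sup>2 / 4 ^ n) * exp (of_nat n * w)
          * eval_powser ((diffs ^^ n) lommel_S00_coeff0) (zeta_half_sq w)
        = k * exp (of_nat n * w) * second_difference ((dzeta2 ^^ n) lommel_S00) w"
        unfolding second_difference_funpow_dzeta2_lommel_S00 by (simp only: mult_ac)
      also have "\<dots> = second_difference (lommel_gen p (- of_nat n)) w" by (rule combination[symmetric])
      finally show ?thesis by (simp only: second_difference_def mult_1 minus_mult_left diff_conv_add_uminus)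
    qed
  qed simp
qed

lemma lommel_integer_order_eq:
  assumes "\<nu> \<in> \<int>" "Re \<nu> \<le> of_nat p"
  obtains p' n where "lommel p \<nu> = lommel_gen p' (- of_nat n)"
proof -
  obtain j where j: "\<nu> = of_int j" using assms(1) by (auto elim: Ints_cases)
  show ?thesis
  proof (cases "0 < j")
    case True
    have \<nu>: "\<nu> = of_nat (nat j)" using True j by simp
    have pos: "\<exists>k::nat. 1 \<le> k \<and> k \<le> p \<and> \<nu> = of_nat k"
      using assms(2) True \<nu> by (intro exI[of _ "nat j"]) auto
    have "lommel p \<nu> = lommel_gen (p - nat \<lfloor>Re \<nu>\<rfloor>) (- \<nu>)"
      by (rule ext) (simp only: lommel_def if_P[OF pos])
    with \<nu> have "lommel p \<nu> = lommel_gen (p - nat j) (- of_nat (nat j))" by simp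
    then show ?thesis by (rule that)
  next
    case False
    have \<nu>: "\<nu> = - of_nat (nat (- j))" using False j by simp
    have "j = int k" if "\<nu> = of_nat k" for k
      using j that by (metis of_int_eq_iff of_int_of_nat_eq)
    with False have not_pos: "\<nexists>k::nat. 1 \<le> k \<and> k \<le> p \<and> \<nu> = of_nat k" by auto
    have "lommel p \<nu> = lommel_gen p \<nu>" by (rule ext) (simp only: lommel_def if_not_P[OF not_pos])
    with \<nu> have "lommel p \<nu> = lommel_gen p (- of_nat (nat (- j)))" by simp
    then show ?thesis by (rule that)
  qed
qed

theorem proposition4p4:
  fixes p :: nat and L M \<nu> :: complex
  assumes "L \<noteq> 0" and "M \<noteq> 0"
    and "\<nu> \<in> \<int> \<Longrightarrow> Re \<nu> \<le> of_nat p"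
  shows "\<forall>k::int. \<not> subnormal (\<lambda>z. lommel p \<nu> (Ln L + 2 * of_real pi * \<i> * of_int k + M * z))"
proof
  fix k :: int
  show "\<not> subnormal (\<lambda>z. lommel p \<nu> (Ln L + 2 * of_real pi * \<i> * of_int k + M * z))"
  proof (cases "\<nu> \<in> \<int>")
    case False
    then show ?thesis by (rule not_subnormal_lommel_nonint[OF _ assms(2)])
  next
    case True
    obtain p' n where reduced: "lommel p \<nu> = lommel_gen p' (- of_nat n)"
      using True assms(3)[OF True] by (rule lommel_integer_order_eq)
    show ?thesis unfolding reduced by (rule not_subnormal_lommel_gen_neg_of_nat[OF assms(2)])
  qed
qed

end
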